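(* Let $\mathbb{G}$ be a linear array, $\mathbb{U}$ the central ULA of its difference coarray, and $\mathbb{F}_r$ ($r\ge1$) the fractal array generated by $\mathbb{G}$. Fix a coupling limit $q\ge0$ and coupling coefficients $c_0=1,c_1,\dots,c_q\in\mathbb{C}$, with $c_k=0$ for $k>q$. Assume $q<\max(\mathbb{G})$ and $q+\max(\mathbb{G})<|\mathbb{U}|$. Then the coupling leakages of $\mathbb{G}$ and $\mathbb{F}_r$ coincide: $\mathcal{L}_{\mathbb{F}_r}=\mathcal{L}_{\mathbb{G}}$.
   Context: A linear array is a finite set $\mathbb{G}\subset\mathbb{Z}$ with $\min\mathbb{G}=0$; its difference coarray is $\mathbb{D}=\{n_1-n_2:n_1,n_2\in\mathbb{G}\}$; its central ULA $\mathbb{U}$ is the largest set $\{-m,\dots,m\}$ contained in $\mathbb{D}$. The fractal array generated by $\mathbb{G}$ (with $M=|\mathbb{U}|$) is $\mathbb{F}_0=\{0\}$, $\mathbb{F}_{r+1}=\bigcup_{n\in\mathbb{G}}(\mathbb{F}_r+nM^r)$ where $A+t=\{a+t:a\in A\}$. For an array $\mathbb{A}=\{a_1<\dots<a_N\}$, its mutual coupling matrix is the $N\times N$ matrix $\mathbf{C}_{\mathbb{A}}$ with entries $(\mathbf{C}_{\mathbb{A}})_{k,l}=c_{|a_k-a_l|}$ (coefficients depend only on sensor separation, $c_0=1$, and $c_d=0$ for $d>q$). Its coupling leakage is $\mathcal{L}_{\mathbb{A}}=\|\mathbf{C}_{\mathbb{A}}-\mathrm{diag}(\mathbf{C}_{\mathbb{A}})\|_F/\|\mathbf{C}_{\mathbb{A}}\|_F$,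 where $\mathrm{diag}(\mathbf{C})$ zeroes all off-diagonal entries and $\|\cdot\|_F$ is the Frobenius norm. *)

theory Defs
  imports "HOL-Analysis.Analysis"
begin

definition linear_array :: "int set \<Rightarrow> bool" where
  "linear_array G \<longleftrightarrow> finite G \<and> G \<noteq> {} \<and> Min G = 0"

definition diff_coarray :: "int set \<Rightarrow> int set" where
  "diff_coarray G = {n1 - n2 | n1 n2. n1 \<in> G \<and> n2 \<in> G}"

definition central_ula_m :: "int set \<Rightarrow> nat" where
  "central_ula_m G = (GREATEST m::nat. {- int m .. int m} \<subseteq> diff_coarray G)"

definition central_ula :: "int set \<Rightarrow> int set" where
  "central_ula G = {- int (central_ula_m G) .. int (central_ula_m G)}"

fun fractal :: "int set \<Rightarrow> int \<Rightarrow> nat \<Rightarrow> int set" where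
  "fractal G M 0 = {0}"
| "fractal G M (Suc r) = (\<Union>n\<in>G. (\<lambda>a. a + n * M ^ r) ` fractal G M r)"

definition fractal_array :: "int set \<Rightarrow> nat \<Rightarrow> int set" where
  "fractal_array G r = fractal G (int (card (central_ula G))) r"

definition coupling_matrix :: "(nat \<Rightarrow> complex) \<Rightarrow> int set \<Rightarrow> nat \<Rightarrow> nat \<Rightarrow> complex" where
  "coupling_matrix c A k l =
     (let xs = sorted_list_of_set A in c (nat \<bar>xs ! k - xs ! l\<bar>))"

definition diag_part :: "(nat \<Rightarrow> nat \<Rightarrow> complex) \<Rightarrow> nat \<Rightarrow> nat \<Rightarrow> complex" where
  "diag_part C k l = (if k = l then C k l else 0)"

definition frob_norm :: "nat \<Rightarrow> (nat \<Rightarrow> nat \<Rightarrow> complex) \<Rightarrow> real" where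
  "frob_norm N C = sqrt (\<Sum>k<N. \<Sum>l<N. (cmod (C k l))\<^sup>2)"

definition coupling_leakage :: "(nat \<Rightarrow> complex) \<Rightarrow> int set \<Rightarrow> real" where
  "coupling_leakage c A =
     (let N = card A; C = coupling_matrix c A
      in frob_norm N (\<lambda>k l. C k l - diag_part C k l) / frob_norm N C)"

end

theory Submission
  imports Defs
begin

text \<open>The squared Frobenius norm of \<open>C\<^sub>A\<close> is the sum of \<open>|c\<^bsub>|a-b|\<^esub>|\<^sup>2\<close> over all ordered
  pairs of sensors, and its diagonal contributes \<open>|A|\<close>, so the leakage depends only on the ratio
  of that sum to \<open>|A|\<close>. The array \<open>F\<^sub>r\<^sub>+\<^sub>1\<close> is the union of the translates \<open>F\<^sub>r + n M\<^sup>r\<close>,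
  \<open>n \<in> G\<close>. By induction on \<open>r \<ge> 1\<close>, any two sensors of \<open>F\<^sub>r\<close> are less than \<open>M\<^sup>r - q\<close> apart,
  so sensors in different translates are more than \<open>q\<close> apart and do not couple. Hence each
  step multiplies both the pair sum and the number of sensors by \<open>|G|\<close>, and the leakage of
  \<open>F\<^sub>r\<close> equals that of \<open>F\<^sub>1 = G\<close>.\<close>

definition diff_weight_sum :: "(int \<Rightarrow> real) \<Rightarrow> int set \<Rightarrow> real" where
  "diff_weight_sum w A = (\<Sum>a\<in>A. \<Sum>b\<in>A. w (a - b))"

definition coupling_weight :: "(nat \<Rightarrow> complex) \<Rightarrow> int \<Rightarrow> real" where
  "coupling_weight c d = (cmod (c (nat \<bar>d\<bar>)))\<^sup>2"

lemma sum_nth_sorted_list_of_set: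
  assumes "finite A"
  shows "(\<Sum>k<card A. f (sorted_list_of_set A ! k)) = (\<Sum>a\<in>A. f a)"
  using assms by (intro sum.reindex_bij_betw bij_betw_nth) auto

lemma sum_sum_nth_sorted_list_of_set:
  assumes "finite A"
  shows "(\<Sum>k<card A. \<Sum>l<card A. f (sorted_list_of_set A ! k) (sorted_list_of_set A ! l))
       = (\<Sum>a\<in>A. \<Sum>b\<in>A. f a b)"
  using assms by (simp add: sum_nth_sorted_list_of_set[where f = "\<lambda>a. sum (f a) A"]
                            sum_nth_sorted_list_of_set[where f = "f _"])

lemma frob_norm_coupling_matrix:
  assumes "finite A"
  shows "frob_norm (card A) (coupling_matrix c A) = sqrt (diff_weight_sum (coupling_weight c) A)"
  using sum_sum_nth_sorted_list_of_set[OF assms, of "\<lambda>a b. coupling_weight c (a - b)"]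
  by (simp add: frob_norm_def coupling_matrix_def Let_def coupling_weight_def diff_weight_sum_def)

lemma frob_norm_coupling_matrix_offdiag:
  fixes c :: "nat \<Rightarrow> complex"
  assumes fin: "finite A"
  defines "C \<equiv> coupling_matrix c A"
  shows "frob_norm (card A) (\<lambda>k l. C k l - diag_part C k l)
       = sqrt (diff_weight_sum (coupling_weight c) A - (cmod (c 0))\<^sup>2 * card A)"
proof -
  let ?xs = "sorted_list_of_set A" and ?w = "coupling_weight c"
  have distinct: "distinct ?xs" and length: "length ?xs = card A"
    using fin by auto
  have "(\<Sum>k<card A. \<Sum>l<card A. (cmod (C k l - diag_part C k l))\<^sup>2)
      = (\<Sum>k<card A. \<Sum>l<card A. (\<lambda>a b. if a = b then 0 else ?w (a - b)) (?xs ! k) (?xs ! l))"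
    using nth_eq_iff_index_eq[OF distinct] length
    by (intro sum.cong refl)
       (auto simp: C_def coupling_matrix_def Let_def diag_part_def coupling_weight_def)
  also have "\<dots> = (\<Sum>a\<in>A. \<Sum>b\<in>A. if a = b then 0 else ?w (a - b))"
    by (rule sum_sum_nth_sorted_list_of_set[OF fin])
  also have "\<dots> = (\<Sum>a\<in>A. \<Sum>b\<in>A. ?w (a - b) - (if a = b then ?w 0 else 0))"
    by (intro sum.cong refl) auto
  also have "\<dots> = diff_weight_sum ?w A - (cmod (c 0))\<^sup>2 * card A"
    using fin by (simp add: sum_subtractf diff_weight_sum_def coupling_weight_def)
  finally show ?thesis
    by (simp add: frob_norm_def)
qed

lemma coupling_leakage_eq:
  assumes "finite A"
  shows "coupling_leakage c A
       = sqrt (diff_weight_sum (coupling_weight c) A - (cmod (c 0))\<^sup>2 * card A)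
         / sqrt (diff_weight_sum (coupling_weight c) A)"
  using assms unfolding coupling_leakage_def Let_def
  by (simp add: frob_norm_coupling_matrix frob_norm_coupling_matrix_offdiag)

lemma diff_weight_sum_translate:
  "diff_weight_sum w ((\<lambda>a. a + t) ` A) = diff_weight_sum w A"
  by (simp add: diff_weight_sum_def sum.reindex inj_on_def)

lemma separated_translates_disjoint:
  fixes q :: int
  assumes "0 \<le> q"
    and separated: "\<And>i j a b. i \<in> I \<Longrightarrow> j \<in> I \<Longrightarrow> i \<noteq> j \<Longrightarrow> a \<in> A \<Longrightarrow> b \<in> A
                     \<Longrightarrow> q < \<bar>(a + t i) - (b + t j)\<bar>"
  shows "disjoint_family_on (\<lambda>i. (\<lambda>a. a + t i) ` A) I"
  using assms unfolding disjoint_family_on_def by force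

lemma card_UN_separated_translates:
  fixes q :: int
  assumes "finite I" "finite A" "0 \<le> q"
    and separated: "\<And>i j a b. i \<in> I \<Longrightarrow> j \<in> I \<Longrightarrow> i \<noteq> j \<Longrightarrow> a \<in> A \<Longrightarrow> b \<in> A
                     \<Longrightarrow> q < \<bar>(a + t i) - (b + t j)\<bar>"
  shows "card (\<Union>i\<in>I. (\<lambda>a. a + t i) ` A) = card I * card A"
  using assms separated_translates_disjoint[of q I A t, OF \<open>0 \<le> q\<close> separated]
  by (subst card_UN_disjoint) (auto simp: card_image inj_on_def disjoint_family_on_def)

lemma diff_weight_sum_UN_separated_translates:
  fixes q :: int
  assumes "finite I" "finite A" "0 \<le> q"
    and separated: "\<And>i j a b. i \<in> I \<Longrightarrow> j \<in> I \<Longrightarrow> i \<noteq> j \<Longrightarrow> a \<in> A \<Longrightarrow> b \<in> A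
                     \<Longrightarrow> q < \<bar>(a + t i) - (b + t j)\<bar>"
    and short_range: "\<And>d. q < \<bar>d\<bar> \<Longrightarrow> w d = 0"
  shows "diff_weight_sum w (\<Union>i\<in>I. (\<lambda>a. a + t i) ` A) = card I * diff_weight_sum w A"
proof -
  let ?A = "\<lambda>i. (\<lambda>a. a + t i) ` A"
  let ?U = "\<Union>i\<in>I. ?A i"
  have only_own_translate: "(\<Sum>y\<in>?U. w (x - y)) = (\<Sum>y\<in>?A i. w (x - y))"
    if "i \<in> I" "x \<in> ?A i" for i x
    using assms that by (intro sum.mono_neutral_right) force+
  have "diff_weight_sum w ?U = (\<Sum>i\<in>I. \<Sum>x\<in>?A i. \<Sum>y\<in>?U. w (x - y))"
    unfolding diff_weight_sum_def
    using assms separated_translates_disjoint[of q I A t, OF \<open>0 \<le> q\<close> separated]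
    by (intro sum.UNION_disjoint) (auto simp: disjoint_family_on_def)
  also have "\<dots> = (\<Sum>i\<in>I. diff_weight_sum w (?A i))"
    by (simp add: only_own_translate diff_weight_sum_def)
  also have "\<dots> = card I * diff_weight_sum w A"
    by (simp add: diff_weight_sum_translate)
  finally show ?thesis .
qed

lemma finite_fractal: "finite G \<Longrightarrow> finite (fractal G M r)"
  by (induction r) auto

lemma fractal_one [simp]: "fractal G M 1 = G"
  by auto

lemma fractal_diff_bound:
  fixes q M :: int
  assumes "0 \<le> q"
    and diameter: "\<And>n n'. n \<in> G \<Longrightarrow> n' \<in> G \<Longrightarrow> \<bar>n - n'\<bar> + q < M"
    and "1 \<le> r" "a \<in> fractal G M r" "b \<in> fractal G M r"
  shows "\<bar>a - b\<bar> + q < M ^ r"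
  using \<open>1 \<le> r\<close> \<open>a \<in> fractal G M r\<close> \<open>b \<in> fractal G M r\<close>
proof (induction r arbitrary: a b rule: nat_induct_at_least)
  case base
  then show ?case using diameter by simp
next
  case (Suc r)
  then obtain n n' a' b' where "n \<in> G" "n' \<in> G" "a' \<in> fractal G M r" "b' \<in> fractal G M r"
    and a: "a = a' + n * M ^ r" and b: "b = b' + n' * M ^ r"
    by auto
  have "M > 0" using diameter[OF \<open>n \<in> G\<close> \<open>n \<in> G\<close>] \<open>0 \<le> q\<close> by simp
  have "a - b = (a' - b') + (n - n') * M ^ r"
    by (simp add: a b algebra_simps)
  then have "\<bar>a - b\<bar> \<le> \<bar>a' - b'\<bar> + \<bar>n - n'\<bar> * M ^ r"
    using \<open>M > 0\<close> abs_triangle_ineq[of "a' - b'" "(n - n') * M ^ r"] by (simp add: abs_mult)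
  moreover have "\<bar>a' - b'\<bar> + q + 1 \<le> M ^ r"
    using Suc.IH[OF \<open>a' \<in> _\<close> \<open>b' \<in> _\<close>] by simp
  moreover have "(\<bar>n - n'\<bar> + q + 1) * M ^ r \<le> M * M ^ r"
    using diameter[OF \<open>n \<in> G\<close> \<open>n' \<in> G\<close>] \<open>M > 0\<close> by (intro mult_right_mono) auto
  moreover have "0 \<le> q * M ^ r" using \<open>0 \<le> q\<close> \<open>M > 0\<close> by simp
  ultimately show ?case by (simp add: algebra_simps)
qed

lemma fractal_Suc_separated:
  fixes q M :: int
  assumes "0 \<le> q"
    and diameter: "\<And>n n'. n \<in> G \<Longrightarrow> n' \<in> G \<Longrightarrow> \<bar>n - n'\<bar> + q < M"
    and "1 \<le> r" "n \<in> G" "n' \<in> G" "n \<noteq> n'" "a \<in> fractal G M r" "b \<in> fractal G M r"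
  shows "q < \<bar>(a + n * M ^ r) - (b + n' * M ^ r)\<bar>"
proof -
  have "M > 0" using diameter[OF \<open>n \<in> G\<close> \<open>n \<in> G\<close>] \<open>0 \<le> q\<close> by simp
  have "M ^ r \<le> \<bar>n - n'\<bar> * M ^ r"
    using \<open>n \<noteq> n'\<close> \<open>M > 0\<close> by (intro mult_le_cancel_right1[THEN iffD2]) auto
  also have "\<dots> = \<bar>(n - n') * M ^ r\<bar>"
    using \<open>M > 0\<close> by (simp add: abs_mult)
  also have "(n - n') * M ^ r = (a + n * M ^ r) - (b + n' * M ^ r) - (a - b)"
    by (simp add: algebra_simps)
  finally show ?thesis
    using fractal_diff_bound[OF assms(1-3,7,8)] by linarith
qed

lemma card_fractal:
  fixes q M :: int
  assumes "finite G" "0 \<le> q"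
    and diameter: "\<And>n n'. n \<in> G \<Longrightarrow> n' \<in> G \<Longrightarrow> \<bar>n - n'\<bar> + q < M"
  shows "card (fractal G M r) = card G ^ r"
proof (induction r)
  case (Suc r)
  show ?case
  proof (cases "r = 0")
    case False
    have "card (\<Union>n\<in>G. (\<lambda>a. a + n * M ^ r) ` fractal G M r)
        = card G * card (fractal G M r)"
      using assms False fractal_Suc_separated[OF \<open>0 \<le> q\<close> diameter, where r = r] finite_fractal
      by (intro card_UN_separated_translates[of G _ q "\<lambda>n. n * M ^ r"]) auto
    with Suc show ?thesis by simp
  qed simp
qed simp

lemma diff_weight_sum_fractal:
  fixes q M :: int
  assumes "finite G" "0 \<le> q"
    and diameter: "\<And>n n'. n \<in> G \<Longrightarrow> n' \<in> G \<Longrightarrow> \<bar>n - n'\<bar> + q < M"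
    and short_range: "\<And>d. q < \<bar>d\<bar> \<Longrightarrow> w d = 0"
  shows "diff_weight_sum w (fractal G M (Suc m)) = card G ^ m * diff_weight_sum w G"
proof (induction m)
  case (Suc m)
  have "diff_weight_sum w (\<Union>n\<in>G. (\<lambda>a. a + n * M ^ Suc m) ` fractal G M (Suc m))
      = card G * diff_weight_sum w (fractal G M (Suc m))"
    using assms fractal_Suc_separated[OF \<open>0 \<le> q\<close> diameter, where r = "Suc m"] finite_fractal
    by (intro diff_weight_sum_UN_separated_translates[of G _ q "\<lambda>n. n * M ^ Suc m"]) auto
  with Suc show ?case by simp
qed simp

theorem theorem7:
  fixes G :: "int set" and r q :: nat and c :: "nat \<Rightarrow> complex"
  assumes "linear_array G"
    and "r \<ge> 1"
    and "c 0 = 1"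
    and "\<forall>k>q. c k = 0"
    and "int q < Max G"
    and "int q + Max G < int (card (central_ula G))"
  shows "coupling_leakage c (fractal_array G r) = coupling_leakage c G"
proof -
  define M where "M = int (card (central_ula G))"
  define S where "S = diff_weight_sum (coupling_weight c) G"
  obtain m where r: "r = Suc m" using \<open>r \<ge> 1\<close> by (cases r) auto
  have G: "finite G" "G \<noteq> {}" "Min G = 0"
    using \<open>linear_array G\<close> by (auto simp: linear_array_def)
  have diameter: "\<bar>n - n'\<bar> + int q < M" if "n \<in> G" "n' \<in> G" for n n'
  proof -
    have "0 \<le> n \<and> n \<le> Max G" "0 \<le> n' \<and> n' \<le> Max G"
      using that G by (metis Min_le Max_ge)+
    then show ?thesis using assms(6) unfolding M_def by linarith
  qed
  have short_range: "coupling_weight c d = 0" if "int q < \<bar>d\<bar>" for d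
    using that assms(4) by (simp add: coupling_weight_def nat_less_iff)
  define K where "K = real (card G ^ m)"
  have "K > 0" using G by (simp add: K_def card_gt_0_iff)
  have "card (fractal_array G r) = card G ^ m * card G"
    using card_fractal[OF \<open>finite G\<close> _ diameter, where r = r]
    by (simp add: fractal_array_def M_def r del: fractal.simps)
  moreover have "diff_weight_sum (coupling_weight c) (fractal_array G r) = K * S"
    using diff_weight_sum_fractal[where w = "coupling_weight c" and m = m,
                                  OF \<open>finite G\<close> _ diameter short_range]
    by (simp add: fractal_array_def M_def r K_def S_def del: fractal.simps)
  ultimately have "coupling_leakage c (fractal_array G r)
                  = sqrt (K * S - K * card G) / sqrt (K * S)"
    by (simp add: coupling_leakage_eq fractal_array_def finite_fractal G assms(3) K_def)
  also have "\<dots> = coupling_leakage c G"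
    using \<open>K > 0\<close> G
    by (simp add: coupling_leakage_eq S_def assms(3) real_sqrt_mult right_diff_distrib[symmetric])
  finally show ?thesis .
qed

end
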